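(* Let $X=(\mathbb R^2,\|\cdot\|_2,\mathcal L^2)$ and $S=\{(x_1,x_2)\in\mathbb R^2: x_1\in[0,1],\ x_2=0\}$. Then for each $\theta\in(1,2)$ there exists a sequence of measures $\{\mathfrak m_k\}\in\mathfrak M_\theta(S)\setminus\mathfrak M^{str}_\theta(S)$.
   Context: Balls are closed: $B_r(x)=\{y:\|y-x\|_2\le r\}$; $\mu=\mathcal L^2$ is Lebesgue measure. A measure means a nonzero Borel regular locally finite measure. For $\theta\ge0$ and a closed nonempty $S$, $\{\mathfrak m_k\}_{k=0}^\infty\in\mathfrak M_\theta(S)$ if there is $\epsilon\in(0,1)$ such that: (M1) $\operatorname{supp}\mathfrak m_k=S$ for all $k\in\mathbb N_0$; (M2) there is $C_1>0$ with $\mathfrak m_k(B_r(x))\le C_1\mu(B_r(x))/r^\theta$ for all $k$, $x\in X$, $r\in(0,\epsilon^k]$; (M3) there is $C_2>0$ with $\mathfrak m_k(B_r(x))\ge C_2\mu(B_r(x))/r^\theta$ for all $k$, $x\in S$, $r\in[\epsilon^k,1]$; (M4) $\mathfrak m_k=w_k\mathfrak m_0$ with $w_k\in L^\infty(\mathfrak m_0)$ and $C_3>0$ such that $\epsilon^{\theta j}/C_3\le w_k(x)/w_{k+j}(x)\le C_3$ for $\mathfrak m_0$-a.e. $x\in S$ and all $k,j\in\mathbb N_0$. $\{\mathfrak m_k\}\in\mathfrak M^{str}_\theta(S)$ if moreover (M5) for every Borel $E\subset S$, $\limsup_{k\to\infty}\mathfrak m_k(B_{\epsilon^k}(x)\cap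 E)/\mathfrak m_k(B_{\epsilon^k}(x))>0$ for $\mathfrak m_0$-a.e. $x\in E$. *)

theory Defs
  imports "HOL-Analysis.Analysis"
begin

definition muB :: "real^2 \<Rightarrow> real \<Rightarrow> real" where
  "muB x r = measure lborel (cball x r)"

text \<open>A measure: nonzero, Borel, locally finite (on R^2 such measures are Borel regular).\<close>
definition is_measure2 :: "(real^2) measure \<Rightarrow> bool" where
  "is_measure2 M \<longleftrightarrow> sets M = sets borel \<and> emeasure M UNIV \<noteq> 0 \<and>
     (\<forall>K. compact K \<longrightarrow> emeasure M K < \<infinity>)"

definition supp :: "(real^2) measure \<Rightarrow> (real^2) set" where
  "supp M = {x. \<forall>r>0. emeasure M (ball x r) > 0}"

definition M_cond :: "real \<Rightarrow> (real^2) set \<Rightarrow> (nat \<Rightarrow> (real^2) measure) \<Rightarrow> real \<Rightarrow> bool" where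
  "M_cond \<theta> S m \<epsilon> \<longleftrightarrow> 0 < \<epsilon> \<and> \<epsilon> < 1 \<and>
     (\<forall>k. is_measure2 (m k)) \<and>
     \<comment> \<open>(M1)\<close>
     (\<forall>k. supp (m k) = S) \<and>
     \<comment> \<open>(M2)\<close>
     (\<exists>C1>0. \<forall>k x r. 0 < r \<and> r \<le> \<epsilon> ^ k \<longrightarrow>
        emeasure (m k) (cball x r) \<le> ennreal (C1 * muB x r / r powr \<theta>)) \<and>
     \<comment> \<open>(M3)\<close>
     (\<exists>C2>0. \<forall>k x r. x \<in> S \<and> \<epsilon> ^ k \<le> r \<and> r \<le> 1 \<longrightarrow>
        ennreal (C2 * muB x r / r powr \<theta>) \<le> emeasure (m k) (cball x r)) \<and>
     \<comment> \<open>(M4)\<close>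
     (\<exists>w :: nat \<Rightarrow> real^2 \<Rightarrow> real.
        (\<forall>k. w k \<in> borel_measurable borel \<and> (\<exists>B. AE x in m 0. \<bar>w k x\<bar> \<le> B) \<and>
             m k = density (m 0) (\<lambda>x. ennreal (w k x))) \<and>
        (\<exists>C3>0. \<forall>k j. AE x in m 0. x \<in> S \<longrightarrow>
             \<epsilon> powr (\<theta> * real j) / C3 \<le> w k x / w (k + j) x \<and> w k x / w (k + j) x \<le> C3))"

definition M5_cond :: "(real^2) set \<Rightarrow> (nat \<Rightarrow> (real^2) measure) \<Rightarrow> real \<Rightarrow> bool" where
  "M5_cond S m \<epsilon> \<longleftrightarrow>
     (\<forall>E \<in> sets borel. E \<subseteq> S \<longrightarrow>
        (AE x in m 0. x \<in> E \<longrightarrow>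
           limsup (\<lambda>k. ereal (measure (m k) (cball x (\<epsilon> ^ k) \<inter> E) /
                               measure (m k) (cball x (\<epsilon> ^ k)))) > 0))"

definition MFam :: "real \<Rightarrow> (real^2) set \<Rightarrow> (nat \<Rightarrow> (real^2) measure) set" where
  "MFam \<theta> S = {m. \<exists>\<epsilon>. M_cond \<theta> S m \<epsilon>}"

definition MFam_str :: "real \<Rightarrow> (real^2) set \<Rightarrow> (nat \<Rightarrow> (real^2) measure) set" where
  "MFam_str \<theta> S = {m. \<exists>\<epsilon>. M_cond \<theta> S m \<epsilon> \<and> M5_cond S m \<epsilon>}"

definition segS :: "(real^2) set" where
  "segS = {x. 0 \<le> x $ 1 \<and> x $ 1 \<le> 1 \<and> x $ 2 = 0}"

end

theory Submission
  imports Defs "HOL-Real_Asymp.Real_Asymp"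
begin

text \<open>Write \<open>t \<in> [0,1)\<close> in base \<open>m\<close> and read its digits in base \<open>m + 1\<close>. The image \<open>\<nu>\<close> of
  Lebesgue measure under this map lives on a Cantor set of Lebesgue measure zero and satisfies
  \<open>\<nu>(B(x,r)) \<le> K r^s\<close> with \<open>s = ln m / ln (m + 1)\<close>, which exceeds \<open>2 - \<theta>\<close> once \<open>m\<close> is large.
  With \<open>\<lambda>\<close> the length on the segment put \<open>m_k = \<nu> + 2^((\<theta> - 1) k) \<lambda>\<close>. For \<open>r \<le> 2^-k\<close> both
  summands are \<open>O(r^(2 - \<theta>))\<close>, and for \<open>2^-k \<le> r \<le> 1\<close> the second alone is at least
  \<open>r^(2 - \<theta>) / 2\<close>; so (M1)--(M4) hold with \<open>\<epsilon> = 1/2\<close>. Yet (M5) fails for every \<open>\<epsilon>\<close> on the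
  Cantor set \<open>E\<close>: there \<open>m_k(B \<inter> E) / m_k(B) \<le> K r^s / (C r^(2 - \<theta>)) \<rightarrow> 0\<close> for the balls
  \<open>B = B(x, r)\<close>, \<open>r = \<epsilon>^k\<close>, although \<open>m_0(E) = 1\<close>.\<close>

definition scaled_floor :: "nat \<Rightarrow> nat \<Rightarrow> real \<Rightarrow> int" where
  "scaled_floor m i t = \<lfloor>real m ^ i * t\<rfloor>"

definition digit :: "nat \<Rightarrow> nat \<Rightarrow> real \<Rightarrow> real" where
  "digit m i t = of_int (scaled_floor m (Suc i) t - int m * scaled_floor m i t)"

lemma digit_bounds:
  assumes "m > 0"
  shows "0 \<le> digit m i t" "digit m i t \<le> real m - 1"
proof -
  define x where "x = real m ^ i * t"
  have scale: "real m ^ Suc i * t = real m * x" by (simp add: x_def)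
  have "int m * \<lfloor>x\<rfloor> \<le> \<lfloor>real m * x\<rfloor>"
    using assms by (metis floor_mono floor_of_int mult_left_mono of_int_floor_le of_int_mult
        of_int_of_nat_eq of_nat_0_le_iff)
  moreover have "\<lfloor>real m * x\<rfloor> < int m * \<lfloor>x\<rfloor> + int m"
  proof -
    have "real m * x < real m * (of_int \<lfloor>x\<rfloor> + 1)" using assms by simp
    then show ?thesis by (simp add: floor_less_iff algebra_simps)
  qed
  moreover have "digit m i t = of_int (\<lfloor>real m * x\<rfloor> - int m * \<lfloor>x\<rfloor>)"
    by (simp only: digit_def scaled_floor_def scale x_def[symmetric])
  ultimately show "0 \<le> digit m i t" "digit m i t \<le> real m - 1" by linarith+
qed

lemma scaled_floor_eq_div:
  assumes "m > 0" "i \<le> n"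
  shows "scaled_floor m i t = scaled_floor m n t div int m ^ (n - i)"
proof -
  have "real m ^ n = real m ^ i * real m ^ (n - i)" using assms by (simp flip: power_add)
  then have "real m ^ i * t = (real m ^ n * t) / of_int (int m ^ (n - i))" using assms by simp
  moreover have "\<lfloor>(real m ^ n * t) / of_int (int m ^ (n - i))\<rfloor> = \<lfloor>real m ^ n * t\<rfloor> div int m ^ (n - i)"
    by (rule floor_divide_real_eq_div) simp
  ultimately show ?thesis unfolding scaled_floor_def by simp
qed

definition cantor_ratio :: "nat \<Rightarrow> real" where
  "cantor_ratio m = 1 / (real m + 1)"

definition cantor_partial :: "nat \<Rightarrow> nat \<Rightarrow> real \<Rightarrow> real" where
  "cantor_partial m n t = (\<Sum>i<n. digit m i t * cantor_ratio m ^ Suc i)"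

definition cantor_fun :: "nat \<Rightarrow> real \<Rightarrow> real" where
  "cantor_fun m t = (\<Sum>i. digit m i t * cantor_ratio m ^ Suc i)"

lemma cantor_ratio_pos: "0 < cantor_ratio m"
  by (simp add: cantor_ratio_def)

lemma cantor_ratio_less_1: "m > 0 \<Longrightarrow> cantor_ratio m < 1"
  by (simp add: cantor_ratio_def)

lemma sums_max_digit_tail:
  assumes "m > 0"
  shows "(\<lambda>i. (real m - 1) * cantor_ratio m ^ Suc (i + n))
           sums ((real m - 1) * cantor_ratio m ^ n / real m)"
proof -
  let ?q = "cantor_ratio m"
  have "norm ?q < 1" using cantor_ratio_pos[of m] cantor_ratio_less_1[OF assms] by simp
  then have "(\<lambda>i. ((real m - 1) * ?q ^ Suc n) * ?q ^ i) sums (((real m - 1) * ?q ^ Suc n) * (1 / (1 - ?q)))"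
    by (intro sums_mult geometric_sums)
  moreover have "((real m - 1) * ?q ^ Suc n) * (1 / (1 - ?q)) = (real m - 1) * ?q ^ n / real m"
  proof -
    have "1 - ?q = real m * ?q" by (simp add: cantor_ratio_def field_simps)
    then show ?thesis using cantor_ratio_pos[of m] by simp
  qed
  moreover have "((real m - 1) * ?q ^ Suc n) * ?q ^ i = (real m - 1) * ?q ^ Suc (i + n)" for i
    by (simp add: power_add algebra_simps)
  ultimately show ?thesis by (simp only:)
qed

lemma summable_cantor_series:
  assumes "m > 0"
  shows "summable (\<lambda>i. digit m i t * cantor_ratio m ^ Suc i)"
proof (rule summable_comparison_test')
  show "summable (\<lambda>i. (real m - 1) * cantor_ratio m ^ Suc (i + 0))"
    using sums_max_digit_tail[OF assms, of 0] by (rule sums_summable)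
  show "norm (digit m i t * cantor_ratio m ^ Suc i) \<le> (real m - 1) * cantor_ratio m ^ Suc (i + 0)" for i
    using digit_bounds[OF assms, of i t] cantor_ratio_pos[of m] by (simp add: abs_mult mult_right_mono)
qed

lemma cantor_fun_minus_partial:
  assumes "m > 0"
  shows "0 \<le> cantor_fun m t - cantor_partial m n t"
    and "cantor_fun m t - cantor_partial m n t \<le> (real m - 1) * cantor_ratio m ^ n / real m"
proof -
  have tail: "cantor_fun m t - cantor_partial m n t = (\<Sum>i. digit m (i + n) t * cantor_ratio m ^ Suc (i + n))"
    unfolding cantor_fun_def cantor_partial_def
    by (subst suminf_minus_initial_segment[OF summable_cantor_series[OF assms]]) simp
  have summable: "summable (\<lambda>i. digit m (i + n) t * cantor_ratio m ^ Suc (i + n))"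
    using summable_cantor_series[OF assms, of t] by (subst summable_iff_shift[where k=n])
  show "0 \<le> cantor_fun m t - cantor_partial m n t" unfolding tail
    by (rule suminf_nonneg[OF summable]) (use digit_bounds[OF assms] cantor_ratio_pos[of m] in simp)
  have "(\<Sum>i. digit m (i + n) t * cantor_ratio m ^ Suc (i + n)) \<le> (\<Sum>i. (real m - 1) * cantor_ratio m ^ Suc (i + n))"
    by (rule suminf_le[OF _ summable sums_summable[OF sums_max_digit_tail[OF assms]]])
       (use digit_bounds[OF assms] cantor_ratio_pos[of m] in \<open>simp add: mult_right_mono\<close>)
  then show "cantor_fun m t - cantor_partial m n t \<le> (real m - 1) * cantor_ratio m ^ n / real m"
    unfolding tail using sums_unique[OF sums_max_digit_tail[OF assms, of n]] by simp
qed

lemma cantor_fun_bounds: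
  assumes "m > 0"
  shows "0 \<le> cantor_fun m t" "cantor_fun m t \<le> 1"
proof -
  have "(real m - 1) / real m \<le> 1" using assms by (simp add: field_simps)
  then show "0 \<le> cantor_fun m t" "cantor_fun m t \<le> 1"
    using cantor_fun_minus_partial[OF assms, of t 0] by (simp_all add: cantor_partial_def)
qed

lemma scaled_floor_cong:
  assumes "m > 0" "scaled_floor m n t = scaled_floor m n t'" "i \<le> n"
  shows "scaled_floor m i t = scaled_floor m i t'"
  using scaled_floor_eq_div[OF assms(1,3)] assms(2) by metis

lemma cantor_partial_cong:
  assumes "m > 0" "scaled_floor m n t = scaled_floor m n t'"
  shows "cantor_partial m n t = cantor_partial m n t'"
  unfolding cantor_partial_def
proof (rule sum.cong[OF refl])
  fix i assume "i \<in> {..<n}"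
  then have "i \<le> n" "Suc i \<le> n" by auto
  then show "digit m i t * cantor_ratio m ^ Suc i = digit m i t' * cantor_ratio m ^ Suc i"
    using scaled_floor_cong[OF assms] by (simp add: digit_def)
qed

text \<open>The digit sets \<open>{0, \<dots>, m - 1}\<close> leave a gap in base \<open>m + 1\<close>: the first differing digit
  separates the images by more than all later digits can make up.\<close>

lemma cantor_fun_gap_first_digit:
  assumes m: "m > 0" and eq: "scaled_floor m j t = scaled_floor m j t'"
    and less: "scaled_floor m (Suc j) t < scaled_floor m (Suc j) t'"
  shows "cantor_ratio m ^ Suc j / real m \<le> cantor_fun m t' - cantor_fun m t"
proof -
  let ?q = "cantor_ratio m ^ Suc j"
  have "digit m j t + 1 \<le> digit m j t'" using eq less by (simp add: digit_def)
  then have "?q \<le> (digit m j t' - digit m j t) * ?q"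
    using cantor_ratio_pos[of m] by (simp add: mult_right_mono)
  moreover have "cantor_partial m (Suc j) u = cantor_partial m j u + digit m j u * ?q" for u
    by (simp add: cantor_partial_def)
  moreover have "?q - (real m - 1) * ?q / real m = ?q / real m" using m by (simp add: field_simps)
  ultimately show ?thesis
    using cantor_fun_minus_partial(1)[OF m, of t' "Suc j"] cantor_fun_minus_partial(2)[OF m, of t "Suc j"]
      cantor_partial_cong[OF m eq] by (simp add: algebra_simps)
qed

lemma cantor_fun_separated:
  assumes m: "m > 0" and t: "0 \<le> t" "t < 1" and t': "0 \<le> t'" "t' < 1"
    and ne: "scaled_floor m n t \<noteq> scaled_floor m n t'"
  shows "cantor_ratio m ^ n / real m \<le> \<bar>cantor_fun m t - cantor_fun m t'\<bar>"
  using ne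
proof (induction n)
  case 0
  have "scaled_floor m 0 t = 0" "scaled_floor m 0 t' = 0"
    using t t' by (auto simp: scaled_floor_def floor_eq_iff)
  with 0 show ?case by simp
next
  case (Suc n)
  have shrink: "cantor_ratio m ^ Suc n / real m \<le> cantor_ratio m ^ n / real m"
    using cantor_ratio_pos[of m] cantor_ratio_less_1[OF m]
    by (simp add: divide_right_mono mult_left_le_one_le)
  consider "scaled_floor m n t \<noteq> scaled_floor m n t'"
    | "scaled_floor m n t = scaled_floor m n t'" "scaled_floor m (Suc n) t < scaled_floor m (Suc n) t'"
    | "scaled_floor m n t' = scaled_floor m n t" "scaled_floor m (Suc n) t' < scaled_floor m (Suc n) t"
    using Suc.prems by (metis neq_iff)
  then show ?case
  proof cases
    case 1
    then show ?thesis using Suc.IH shrink by linarith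
  next
    case 2
    then show ?thesis using cantor_fun_gap_first_digit[OF m] by fastforce
  next
    case 3
    then show ?thesis using cantor_fun_gap_first_digit[OF m] by fastforce
  qed
qed

lemma borel_measurable_cantor_fun[measurable]: "cantor_fun m \<in> borel_measurable borel"
  unfolding cantor_fun_def[abs_def] digit_def scaled_floor_def by measurable

definition cantor_dim :: "nat \<Rightarrow> real" where
  "cantor_dim m = ln (real m) / ln (real m + 1)"

lemma cantor_dim_nonneg: "m \<ge> 2 \<Longrightarrow> 0 \<le> cantor_dim m"
  by (simp add: cantor_dim_def)

lemma cantor_dim_tendsto_1: "cantor_dim \<longlonglongrightarrow> 1"
  unfolding cantor_dim_def[abs_def] by real_asymp

lemma cantor_ratio_power_powr_dim:
  assumes "m \<ge> 2"
  shows "(cantor_ratio m ^ n) powr cantor_dim m = (1 / real m) ^ n"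
proof -
  have q: "0 < cantor_ratio m" by (rule cantor_ratio_pos)
  have "cantor_ratio m powr cantor_dim m = exp (cantor_dim m * ln (cantor_ratio m))"
    using q by (simp add: powr_def)
  also have "ln (cantor_ratio m) = - ln (real m + 1)" by (simp add: cantor_ratio_def ln_div)
  also have "cantor_dim m * - ln (real m + 1) = - ln (real m)" using assms by (simp add: cantor_dim_def)
  also have "exp (- ln (real m)) = 1 / real m" using assms by (simp add: exp_minus inverse_eq_divide)
  finally have base: "cantor_ratio m powr cantor_dim m = 1 / real m" .
  have "(cantor_ratio m ^ n) powr cantor_dim m = (cantor_ratio m powr real n) powr cantor_dim m"
    by (simp add: powr_realpow q)
  also have "\<dots> = (cantor_ratio m powr cantor_dim m) powr real n" by (rule powr_powr_swap)
  also have "\<dots> = (1 / real m) ^ n" unfolding base using assms by (subst powr_realpow) auto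
  finally show ?thesis .
qed

lemma emeasure_cantor_preimage_le_power:
  assumes m: "m > 0" and r: "2 * r < cantor_ratio m ^ n / real m"
  shows "emeasure lborel {t \<in> {0..<1}. \<bar>cantor_fun m t - y\<bar> \<le> r} \<le> ennreal ((1 / real m) ^ n)"
proof (cases "{t \<in> {0..<1}. \<bar>cantor_fun m t - y\<bar> \<le> r} = {}")
  case True
  then show ?thesis by (simp only: True) simp
next
  case False
  then obtain t0 where t0: "t0 \<in> {0..<1}" "\<bar>cantor_fun m t0 - y\<bar> \<le> r" by auto
  define K where "K = scaled_floor m n t0"
  have "{t \<in> {0..<1}. \<bar>cantor_fun m t - y\<bar> \<le> r}
      \<subseteq> {of_int K / real m ^ n .. of_int K / real m ^ n + (1 / real m) ^ n}"
  proof
    fix t assume t: "t \<in> {t \<in> {0..<1}. \<bar>cantor_fun m t - y\<bar> \<le> r}"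
    have "scaled_floor m n t = K"
      using cantor_fun_separated[OF m, of t t0 n] t t0 r unfolding K_def by fastforce
    then have "of_int K \<le> real m ^ n * t" "real m ^ n * t < of_int K + 1"
      unfolding scaled_floor_def by linarith+
    then show "t \<in> {of_int K / real m ^ n .. of_int K / real m ^ n + (1 / real m) ^ n}"
      using m by (auto simp: field_simps power_one_over)
  qed
  then have "emeasure lborel {t \<in> {0..<1}. \<bar>cantor_fun m t - y\<bar> \<le> r}
      \<le> emeasure lborel {of_int K / real m ^ n .. of_int K / real m ^ n + (1 / real m) ^ n}"
    by (rule emeasure_mono) simp
  then show ?thesis by simp
qed

lemma exists_power_bracket:
  fixes q x :: real
  assumes "0 < q" "q < 1" "0 < x" "x < 1"
  obtains n where "x < q ^ n" "q ^ Suc n \<le> x"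
proof
  obtain N where "q ^ N < x" using real_arch_pow_inv[of x q] assms by blast
  moreover have "q ^ Suc N \<le> q ^ N" using assms by (intro power_decreasing) auto
  ultimately have "q ^ Suc N \<le> x" by linarith
  then show suc: "q ^ Suc (LEAST n. q ^ Suc n \<le> x) \<le> x" by (rule LeastI)
  show "x < q ^ (LEAST n. q ^ Suc n \<le> x)"
  proof (cases "LEAST n. q ^ Suc n \<le> x")
    case (Suc k)
    then have "\<not> q ^ Suc k \<le> x" by (metis lessI not_less_Least)
    then show ?thesis using Suc by simp
  qed (use assms in simp)
qed

definition cantor_frostman_const :: "nat \<Rightarrow> real" where
  "cantor_frostman_const m = (2 * real m * (real m + 1)) powr cantor_dim m"

lemma cantor_frostman_const_pos: "m \<ge> 2 \<Longrightarrow> 0 < cantor_frostman_const m"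
  by (simp add: cantor_frostman_const_def)

lemma emeasure_cantor_preimage_le:
  assumes m: "m \<ge> 2" and r: "r > 0"
  shows "emeasure lborel {t \<in> {0..<1}. \<bar>cantor_fun m t - y\<bar> \<le> r}
           \<le> ennreal (cantor_frostman_const m * r powr cantor_dim m)"
proof -
  let ?s = "cantor_dim m" and ?q = "cantor_ratio m"
  have m0: "m > 0" using m by simp
  have const: "cantor_frostman_const m * r powr ?s = ((real m + 1) * (2 * real m * r)) powr ?s"
  proof -
    have "(real m + 1) * (2 * real m * r) = (2 * real m * (real m + 1)) * r" by (simp add: algebra_simps)
    then show ?thesis unfolding cantor_frostman_const_def using r by (simp add: powr_mult)
  qed
  show ?thesis
  proof (cases "1 \<le> 2 * real m * r")
    case True
    have "2 * real m * r \<le> (real m + 1) * (2 * real m * r)"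
      using mult_right_mono[of 1 "real m + 1" "2 * real m * r"] r by simp
    with True have "1 \<le> (real m + 1) * (2 * real m * r)" by linarith
    then have "1 \<le> cantor_frostman_const m * r powr ?s"
      unfolding const using cantor_dim_nonneg[OF m] by (rule ge_one_powr_ge_zero)
    moreover have "emeasure lborel {t \<in> {0..<1}. \<bar>cantor_fun m t - y\<bar> \<le> r} \<le> emeasure lborel {0..<1::real}"
      by (rule emeasure_mono) auto
    ultimately show ?thesis by (simp add: ennreal_leI order_trans)
  next
    case False
    obtain n where n: "2 * real m * r < ?q ^ n" "?q ^ Suc n \<le> 2 * real m * r"
      using exists_power_bracket[OF cantor_ratio_pos cantor_ratio_less_1[OF m0], of "2 * real m * r"]
        False r m0 by auto
    have "emeasure lborel {t \<in> {0..<1}. \<bar>cantor_fun m t - y\<bar> \<le> r} \<le> ennreal ((1 / real m) ^ n)"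
      using n(1) m0 by (intro emeasure_cantor_preimage_le_power) (auto simp: field_simps)
    also have "(1 / real m) ^ n = ((real m + 1) * ?q ^ Suc n) powr ?s"
      using cantor_ratio_power_powr_dim[OF m] by (simp add: cantor_ratio_def)
    also have "\<dots> \<le> ((real m + 1) * (2 * real m * r)) powr ?s"
      using n(2) cantor_dim_nonneg[OF m] cantor_ratio_pos[of m] by (intro powr_mono2 mult_left_mono) auto
    finally show ?thesis unfolding const by (simp add: ennreal_leI order_trans)
  qed
qed

definition cantor_interval :: "nat \<Rightarrow> nat \<Rightarrow> nat \<Rightarrow> real set" where
  "cantor_interval m n k =
     {cantor_partial m n (real k / real m ^ n) .. cantor_partial m n (real k / real m ^ n) + cantor_ratio m ^ n}"

definition cantor_set :: "nat \<Rightarrow> real set" where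
  "cantor_set m = (\<Inter>n. \<Union>k<m ^ n. cantor_interval m n k)"

lemma closed_cantor_set: "closed (cantor_set m)"
  unfolding cantor_set_def cantor_interval_def by (intro closed_INT closed_UN) auto

lemma cantor_fun_in_cantor_set:
  assumes m: "m > 0" and t: "0 \<le> t" "t < 1"
  shows "cantor_fun m t \<in> cantor_set m"
  unfolding cantor_set_def
proof
  fix n
  define k where "k = nat (scaled_floor m n t)"
  have pos: "0 < real m ^ n" using m by simp
  have "0 \<le> scaled_floor m n t" unfolding scaled_floor_def using t pos by simp
  moreover have "real m ^ n * t < real m ^ n" using t pos by simp
  then have "scaled_floor m n t < int m ^ n" unfolding scaled_floor_def
    by (metis floor_less_iff of_int_of_nat_eq of_nat_power)
  ultimately have k: "k < m ^ n" unfolding k_def by (metis nat_less_iff of_nat_power)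
  have "scaled_floor m n (real k / real m ^ n) = scaled_floor m n t"
    unfolding k_def scaled_floor_def using t pos by simp
  then have "cantor_partial m n t = cantor_partial m n (real k / real m ^ n)"
    by (rule cantor_partial_cong[OF m, symmetric])
  moreover have "(real m - 1) * cantor_ratio m ^ n / real m \<le> cantor_ratio m ^ n"
    using m cantor_ratio_pos[of m] by (simp add: field_simps)
  ultimately have "cantor_fun m t \<in> cantor_interval m n k"
    using cantor_fun_minus_partial[OF m, of t n] unfolding cantor_interval_def by auto
  with k show "cantor_fun m t \<in> (\<Union>k<m ^ n. cantor_interval m n k)" by blast
qed

text \<open>At level \<open>n\<close> the set is covered by \<open>m^n\<close> intervals of length \<open>(m + 1)^-n\<close>.\<close>

lemma cantor_set_translate_null:
  assumes m: "m > 0"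
  shows "emeasure lborel {x. x - c \<in> cantor_set m} = 0"
proof -
  have bound: "emeasure lborel {x. x - c \<in> cantor_set m} \<le> ennreal ((real m * cantor_ratio m) ^ n)" for n
  proof -
    have "{x. x - c \<in> cantor_set m} \<subseteq> (\<Union>k<m ^ n. (+) c ` cantor_interval m n k)"
      unfolding cantor_set_def by (force simp: image_iff)
    then have "emeasure lborel {x. x - c \<in> cantor_set m} \<le> emeasure lborel (\<Union>k<m ^ n. (+) c ` cantor_interval m n k)"
      by (rule emeasure_mono) (auto simp: cantor_interval_def)
    also have "\<dots> \<le> (\<Sum>k<m ^ n. emeasure lborel ((+) c ` cantor_interval m n k))"
      by (rule emeasure_subadditive_finite) (auto simp: cantor_interval_def)
    also have "\<dots> = (\<Sum>k<m ^ n. ennreal (cantor_ratio m ^ n))"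
      using cantor_ratio_pos[of m] by (simp add: cantor_interval_def)
    also have "\<dots> = ennreal ((real m * cantor_ratio m) ^ n)"
      using cantor_ratio_pos[of m]
      by (simp add: ennreal_of_nat_eq_real_of_nat ennreal_mult power_mult_distrib)
    finally show ?thesis .
  qed
  have "(\<lambda>n. ennreal ((real m * cantor_ratio m) ^ n)) \<longlonglongrightarrow> ennreal 0"
    using cantor_ratio_pos[of m] by (intro tendsto_ennrealI LIMSEQ_power_zero) (auto simp: cantor_ratio_def)
  then have "emeasure lborel {x. x - c \<in> cantor_set m} \<le> ennreal 0"
    by (rule tendsto_le[OF trivial_limit_sequentially _ tendsto_const]) (use bound in auto)
  then show ?thesis by simp
qed

definition on_axis :: "real \<Rightarrow> real^2" where
  "on_axis x = x *\<^sub>R axis 1 1"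

lemma on_axis_nth[simp]: "on_axis x $ 1 = x" "on_axis x $ 2 = 0"
  by (simp_all add: on_axis_def axis_def)

lemma dist_on_axis: "dist (on_axis a) (on_axis b) = \<bar>a - b\<bar>"
proof -
  have "on_axis a - on_axis b = (a - b) *\<^sub>R axis 1 1" by (simp add: on_axis_def algebra_simps)
  then show ?thesis by (simp add: dist_norm)
qed

lemma abs_diff_nth1_le_dist: "\<bar>a - p $ 1\<bar> \<le> dist (on_axis a) p"
  using component_le_norm_cart[of "on_axis a - p" 1] by (simp add: dist_norm)

lemma borel_measurable_on_axis[measurable]: "on_axis \<in> borel_measurable borel"
  unfolding on_axis_def by (intro borel_measurable_continuous_onI continuous_intros)

lemma on_axis_in_segS: "0 \<le> x \<Longrightarrow> x \<le> 1 \<Longrightarrow> on_axis x \<in> segS"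
  by (simp add: segS_def)

lemma on_axis_nth1_segS: "p \<in> segS \<Longrightarrow> on_axis (p $ 1) = p"
  by (simp add: segS_def vec_eq_iff forall_2)

lemma closed_segS: "closed segS"
  unfolding segS_def by (intro closed_Collect_conj closed_Collect_le closed_Collect_eq continuous_intros)

definition cantor_line :: "nat \<Rightarrow> (real^2) set" where
  "cantor_line m = {p. p $ 2 = 0 \<and> p $ 1 \<in> cantor_set m}"

lemma cantor_set_borel[measurable]: "cantor_set m \<in> sets borel"
  using closed_cantor_set by (rule borel_closed)

lemma cantor_line_borel[measurable]: "cantor_line m \<in> sets borel"
  unfolding cantor_line_def by measurable

text \<open>\<open>[0,1)\<close> is sent to the Cantor set by the Cantor map and \<open>[1,2)\<close> onto the segment by
  translation, so that the image of Lebesgue measure on \<open>[0,2)\<close> is \<open>\<nu> + \<lambda>\<close>.\<close>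

definition seg_param :: "nat \<Rightarrow> real \<Rightarrow> real^2" where
  "seg_param m t = (if t < 1 then on_axis (cantor_fun m t) else on_axis (t - 1))"

lemma borel_measurable_seg_param[measurable]: "seg_param m \<in> borel_measurable borel"
  unfolding seg_param_def by measurable

definition cantor_part :: "nat \<Rightarrow> (real^2) set \<Rightarrow> ennreal" where
  "cantor_part m A = emeasure lborel {t \<in> {0..<1}. on_axis (cantor_fun m t) \<in> A}"

definition segment_part :: "(real^2) set \<Rightarrow> ennreal" where
  "segment_part A = emeasure lborel {t \<in> {1..<2}. on_axis (t - 1) \<in> A}"

definition seg_weight :: "real \<Rightarrow> nat \<Rightarrow> real" where
  "seg_weight \<theta> k = 2 powr ((\<theta> - 1) * real k)"

definition weight :: "nat \<Rightarrow> real \<Rightarrow> nat \<Rightarrow> real^2 \<Rightarrow> real" where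
  "weight m \<theta> k p = (if p \<in> cantor_line m then 1 else seg_weight \<theta> k)"

definition example_measure :: "nat \<Rightarrow> real \<Rightarrow> nat \<Rightarrow> (real^2) measure" where
  "example_measure m \<theta> k =
     density (distr (density lborel (indicator {0..<2})) borel (seg_param m)) (\<lambda>p. ennreal (weight m \<theta> k p))"

lemma sets_example_measure[simp]: "sets (example_measure m \<theta> k) = sets borel"
  by (simp add: example_measure_def)

lemma seg_weight_pos: "0 < seg_weight \<theta> k"
  by (simp add: seg_weight_def)

lemma seg_weight_eq: "seg_weight \<theta> k = (2 ^ k) powr (\<theta> - 1)"
  by (simp add: seg_weight_def powr_realpow[symmetric] powr_powr mult.commute)

lemma borel_measurable_weight[measurable]: "weight m \<theta> k \<in> borel_measurable borel"
  unfolding weight_def by measurable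

text \<open>The Cantor set has Lebesgue measure zero, so off a null set of parameters the weight is
  \<open>1\<close> on \<open>[0,1)\<close> and \<open>2^((\<theta> - 1) k)\<close> on \<open>[1,2)\<close>.\<close>

lemma weight_seg_param_AE:
  assumes m: "m > 0"
  shows "AE t in lborel. indicator {0..<2} t * (ennreal (weight m \<theta> k (seg_param m t)) * indicator A (seg_param m t))
     = indicator {t \<in> {0..<1}. on_axis (cantor_fun m t) \<in> A} t
       + ennreal (seg_weight \<theta> k) * indicator {t \<in> {1..<2}. on_axis (t - 1) \<in> A} t"
proof -
  have "{t. t - 1 \<in> cantor_set m} \<in> sets borel" by measurable
  then have null: "{t. t - 1 \<in> cantor_set m} \<in> null_sets lborel"
    using cantor_set_translate_null[OF m, of 1] by (simp add: null_sets_def)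
  have "on_axis (cantor_fun m t) \<in> cantor_line m" if "0 \<le> t" "t < 1" for t
    using cantor_fun_in_cantor_set[OF m that] by (simp add: cantor_line_def)
  moreover have "on_axis (t - 1) \<notin> cantor_line m" if "t - 1 \<notin> cantor_set m" for t
    using that by (simp add: cantor_line_def)
  ultimately show ?thesis
    by (intro AE_I'[OF null]) (auto simp: seg_param_def weight_def indicator_def)
qed

lemma emeasure_example_measure:
  assumes m: "m > 0" and A: "A \<in> sets borel"
  shows "emeasure (example_measure m \<theta> k) A = cantor_part m A + ennreal (seg_weight \<theta> k) * segment_part A"
proof -
  define I1 where "I1 = {t \<in> {0..<1}. on_axis (cantor_fun m t) \<in> A}"
  define I2 where "I2 = {t \<in> {1..<2::real}. on_axis (t - 1) \<in> A}"
  have [measurable]: "I1 \<in> sets borel" "I2 \<in> sets borel" unfolding I1_def I2_def using A by measurable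
  have "emeasure (example_measure m \<theta> k) A
      = (\<integral>\<^sup>+ t. indicator {0..<2} t * (ennreal (weight m \<theta> k (seg_param m t)) * indicator A (seg_param m t)) \<partial>lborel)"
    unfolding example_measure_def using A
    by (simp add: emeasure_density nn_integral_distr nn_integral_density mult.commute)
  also have "\<dots> = (\<integral>\<^sup>+ t. indicator I1 t + ennreal (seg_weight \<theta> k) * indicator I2 t \<partial>lborel)"
    unfolding I1_def I2_def by (rule nn_integral_cong_AE[OF weight_seg_param_AE[OF m]])
  also have "\<dots> = emeasure lborel I1 + ennreal (seg_weight \<theta> k) * emeasure lborel I2"
    by (subst nn_integral_add) (auto simp: nn_integral_cmult)
  finally show ?thesis unfolding I1_def I2_def cantor_part_def segment_part_def .
qed

lemma cantor_part_le_1: "cantor_part m A \<le> 1"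
proof -
  have "cantor_part m A \<le> emeasure lborel {0..<1::real}" unfolding cantor_part_def by (rule emeasure_mono) auto
  then show ?thesis by simp
qed

lemma segment_part_le_1: "segment_part A \<le> 1"
proof -
  have "segment_part A \<le> emeasure lborel {1..<2::real}" unfolding segment_part_def by (rule emeasure_mono) auto
  then show ?thesis by simp
qed

lemma segment_part_mono: "A \<subseteq> B \<Longrightarrow> B \<in> sets borel \<Longrightarrow> segment_part A \<le> segment_part B"
  unfolding segment_part_def by (rule emeasure_mono) auto

lemma cantor_part_cball:
  assumes "m \<ge> 2" "r > 0"
  shows "cantor_part m (cball p r) \<le> ennreal (cantor_frostman_const m * r powr cantor_dim m)"
proof -
  have "cantor_part m (cball p r) \<le> emeasure lborel {t \<in> {0..<1}. \<bar>cantor_fun m t - p $ 1\<bar> \<le> r}"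
    unfolding cantor_part_def
    by (rule emeasure_mono) (use abs_diff_nth1_le_dist in \<open>auto simp: dist_commute intro: order_trans\<close>)
  also have "\<dots> \<le> ennreal (cantor_frostman_const m * r powr cantor_dim m)"
    by (rule emeasure_cantor_preimage_le[OF assms])
  finally show ?thesis .
qed

lemma cantor_part_cantor_line:
  assumes "m > 0"
  shows "cantor_part m (segS \<inter> cantor_line m) = 1"
proof -
  have "{t \<in> {0..<1}. on_axis (cantor_fun m t) \<in> segS \<inter> cantor_line m} = {0..<1}"
    using cantor_fun_in_cantor_set[OF assms] cantor_fun_bounds[OF assms] on_axis_in_segS
    by (auto simp: cantor_line_def)
  then show ?thesis by (simp add: cantor_part_def)
qed

lemma segment_part_cball:
  assumes "0 \<le> r"
  shows "segment_part (cball p r) \<le> ennreal (2 * r)"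
proof -
  have "{t \<in> {1..<2}. on_axis (t - 1) \<in> cball p r} \<subseteq> {1 + p $ 1 - r .. 1 + p $ 1 + r}"
  proof
    fix t assume "t \<in> {t \<in> {1..<2}. on_axis (t - 1) \<in> cball p r}"
    then have "dist (on_axis (t - 1)) p \<le> r" by (simp add: dist_commute)
    with abs_diff_nth1_le_dist[of "t - 1" p] show "t \<in> {1 + p $ 1 - r .. 1 + p $ 1 + r}" by auto
  qed
  then have "segment_part (cball p r) \<le> emeasure lborel {1 + p $ 1 - r .. 1 + p $ 1 + r}"
    unfolding segment_part_def by (rule emeasure_mono) simp
  then show ?thesis using assms by simp
qed

lemma segment_part_cantor_line:
  assumes "m > 0"
  shows "segment_part (B \<inter> cantor_line m) = 0"
proof -
  have "{t. t - 1 \<in> cantor_set m} \<in> sets borel" by measurable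
  then have "segment_part (B \<inter> cantor_line m) \<le> emeasure lborel {t. t - 1 \<in> cantor_set m}"
    unfolding segment_part_def by (intro emeasure_mono) (auto simp: cantor_line_def)
  then show ?thesis using cantor_set_translate_null[OF assms, of 1] by simp
qed

lemma segment_part_ball:
  assumes p: "p \<in> segS" and d: "0 < d" "d \<le> 1/2"
  shows "ennreal d \<le> segment_part (ball p (2 * d))"
proof -
  have p1: "0 \<le> p $ 1" "p $ 1 \<le> 1" using p by (auto simp: segS_def)
  obtain a where a: "{a <..< a + d} \<subseteq> {t \<in> {1..<2}. \<bar>t - 1 - p $ 1\<bar> < 2 * d}"
  proof (cases "p $ 1 \<le> 1/2")
    case True
    show ?thesis by (rule that[of "1 + p $ 1"]) (use True d p1 in auto)
  next
    case False
    show ?thesis by (rule that[of "1 + p $ 1 - d"]) (use False d p1 in auto)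
  qed
  also have "\<dots> \<subseteq> {t \<in> {1..<2}. on_axis (t - 1) \<in> ball p (2 * d)}"
    using dist_on_axis[of _ "p $ 1"] on_axis_nth1_segS[OF p] by (force simp: dist_commute)
  finally have sub: "{a <..< a + d} \<subseteq> {t \<in> {1..<2}. on_axis (t - 1) \<in> ball p (2 * d)}" .
  have [measurable]: "ball p (2 * d) \<in> sets borel" by (simp add: borel_open)
  have "emeasure lborel {a <..< a + d} \<le> segment_part (ball p (2 * d))"
    unfolding segment_part_def using sub by (rule emeasure_mono) measurable
  then show ?thesis using d by simp
qed

lemma segS_disjoint_null:
  assumes "m > 0" "A \<inter> segS = {}"
  shows "cantor_part m A = 0" "segment_part A = 0"
proof -
  have "{t \<in> {0..<1}. on_axis (cantor_fun m t) \<in> A} = {}"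
    using assms cantor_fun_bounds[OF assms(1)] on_axis_in_segS by fastforce
  then show "cantor_part m A = 0" unfolding cantor_part_def by (metis emeasure_empty)
  have "{t \<in> {1..<2::real}. on_axis (t - 1) \<in> A} = {}" using assms on_axis_in_segS by fastforce
  then show "segment_part A = 0" unfolding segment_part_def by (metis emeasure_empty)
qed

lemma mult_muB_div_powr:
  assumes "0 < r"
  shows "c * muB x r / r powr \<theta> = c * unit_ball_vol 2 * r powr (2 - \<theta>)"
proof -
  have "muB x r = unit_ball_vol 2 * r powr 2"
    using assms emeasure_cball[of r x] by (simp add: muB_def measure_def powr_numeral)
  then show ?thesis by (simp add: powr_diff)
qed

lemma M_cond_measure_cball_lower:
  assumes "M_cond \<theta> S m \<epsilon>"
  obtains C where "C > 0" "\<And>k x. x \<in> S \<Longrightarrow> C * (\<epsilon> ^ k) powr (2 - \<theta>) \<le> measure (m k) (cball x (\<epsilon> ^ k))"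
proof -
  from assms have eps: "0 < \<epsilon>" "\<epsilon> < 1" and meas: "\<And>k. is_measure2 (m k)"
    unfolding M_cond_def by blast+
  from assms obtain C2 where C2: "C2 > 0" and lower: "\<And>k x r. x \<in> S \<Longrightarrow> \<epsilon> ^ k \<le> r \<Longrightarrow> r \<le> 1 \<Longrightarrow>
      ennreal (C2 * muB x r / r powr \<theta>) \<le> emeasure (m k) (cball x r)"
    unfolding M_cond_def by blast
  show ?thesis
  proof (rule that[of "C2 * unit_ball_vol 2"])
    show "0 < C2 * unit_ball_vol 2" using C2 by simp
    fix k x assume x: "x \<in> S"
    have r: "0 < \<epsilon> ^ k" "\<epsilon> ^ k \<le> 1" using eps by (auto simp: power_le_one)
    have "emeasure (m k) (cball x (\<epsilon> ^ k)) < top"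
      using meas[of k] unfolding is_measure2_def by simp
    then have "emeasure (m k) (cball x (\<epsilon> ^ k)) \<noteq> top" by simp
    then show "C2 * unit_ball_vol 2 * (\<epsilon> ^ k) powr (2 - \<theta>) \<le> measure (m k) (cball x (\<epsilon> ^ k))"
      using lower[OF x order.refl r(2)]
      by (simp add: mult_muB_div_powr[OF r(1)] emeasure_eq_ennreal_measure ennreal_le_iff)
  qed
qed

text \<open>(M3) gives \<open>m_k(B(x, \<epsilon>^k)) \<ge> C \<epsilon>^(k (2 - \<theta>))\<close> on \<open>S\<close>, so the relative mass of a set with
  Frostman exponent \<open>s > 2 - \<theta>\<close> in these balls tends to zero.\<close>

lemma not_M5_cond_if_thin:
  assumes M: "M_cond \<theta> S m \<epsilon>"
    and E: "E \<in> sets borel" "E \<subseteq> S" "emeasure (m 0) E \<noteq> 0"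
    and s: "2 - \<theta> < s"
    and thin: "\<And>k x r. 0 < r \<Longrightarrow> measure (m k) (cball x r \<inter> E) \<le> K * r powr s"
  shows "\<not> M5_cond S m \<epsilon>"
proof
  assume M5: "M5_cond S m \<epsilon>"
  from M have eps: "0 < \<epsilon>" "\<epsilon> < 1" and sets: "sets (m 0) = sets borel"
    unfolding M_cond_def is_measure2_def by blast+
  obtain C where C: "C > 0"
    and lower: "\<And>k x. x \<in> S \<Longrightarrow> C * (\<epsilon> ^ k) powr (2 - \<theta>) \<le> measure (m k) (cball x (\<epsilon> ^ k))"
    using M_cond_measure_cball_lower[OF M] by blast
  define q where "q = \<epsilon> powr (s - (2 - \<theta>))"
  have q: "0 \<le> q" "q < 1" unfolding q_def using eps s by (auto simp: powr01_less_one)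
  have ratio: "measure (m k) (cball x (\<epsilon> ^ k) \<inter> E) / measure (m k) (cball x (\<epsilon> ^ k)) \<le> K / C * q ^ k"
    if x: "x \<in> E" for k x
  proof -
    have r: "0 < \<epsilon> ^ k" using eps by simp
    have "measure (m k) (cball x (\<epsilon> ^ k) \<inter> E) / measure (m k) (cball x (\<epsilon> ^ k))
        \<le> (K * (\<epsilon> ^ k) powr s) / (C * (\<epsilon> ^ k) powr (2 - \<theta>))"
      using thin[OF r, of k x] lower[of x k] x E(2) C eps
      by (intro frac_le) (auto intro: order_trans[OF measure_nonneg])
    also have "\<dots> = K / C * ((\<epsilon> ^ k) powr s / (\<epsilon> ^ k) powr (2 - \<theta>))" by simp
    also have "(\<epsilon> ^ k) powr s / (\<epsilon> ^ k) powr (2 - \<theta>) = q ^ k"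
      unfolding q_def powr_diff[symmetric] using eps
      by (simp add: powr_realpow[symmetric] powr_powr powr_powr_swap mult.commute)
    finally show ?thesis .
  qed
  have "(\<lambda>k. ereal (K / C * q ^ k)) \<longlonglongrightarrow> ereal 0"
    using q by (intro tendsto_ereal tendsto_mult_right_zero LIMSEQ_power_zero) auto
  then have limsup_le: "limsup (\<lambda>k. ereal (measure (m k) (cball x (\<epsilon> ^ k) \<inter> E) /
      measure (m k) (cball x (\<epsilon> ^ k)))) \<le> 0" if "x \<in> E" for x
    using Limsup_mono[of _ "\<lambda>k. ereal (K / C * q ^ k)"] ratio[OF that] lim_imp_Limsup
    by (metis (no_types, lifting) always_eventually ereal_less_eq(3) trivial_limit_sequentially
        zero_ereal_def)
  have "AE x in m 0. x \<in> E \<longrightarrow> limsup (\<lambda>k. ereal (measure (m k) (cball x (\<epsilon> ^ k) \<inter> E) /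
      measure (m k) (cball x (\<epsilon> ^ k)))) > 0"
    using M5 E(1,2) unfolding M5_cond_def by blast
  then have "AE x in m 0. x \<notin> E"
    by eventually_elim (use limsup_le in force)
  then have "emeasure (m 0) E = 0"
    using E(1) sets sets_eq_imp_space_eq[OF sets] by (subst (asm) AE_iff_measurable[of E]) auto
  with E(3) show False by simp
qed

lemma is_measure2_example_measure:
  assumes "m > 0"
  shows "is_measure2 (example_measure m \<theta> k)"
  unfolding is_measure2_def
proof (intro conjI allI impI)
  show "sets (example_measure m \<theta> k) = sets borel" by simp
  have "{t \<in> {0..<1::real}. on_axis (cantor_fun m t) \<in> UNIV} = {0..<1}" by auto
  then have "cantor_part m UNIV = 1" unfolding cantor_part_def by simp
  then show "emeasure (example_measure m \<theta> k) UNIV \<noteq> 0"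
    by (simp add: emeasure_example_measure[OF assms])
  fix K :: "(real^2) set" assume "compact K"
  then have "emeasure (example_measure m \<theta> k) K = cantor_part m K + ennreal (seg_weight \<theta> k) * segment_part K"
    by (simp add: emeasure_example_measure[OF assms] borel_compact)
  also have "\<dots> \<le> 1 + ennreal (seg_weight \<theta> k) * 1"
    by (intro add_mono mult_left_mono cantor_part_le_1 segment_part_le_1) simp
  also have "\<dots> < \<infinity>" by (simp flip: ennreal_plus)
  finally show "emeasure (example_measure m \<theta> k) K < \<infinity>" .
qed

lemma supp_example_measure:
  assumes m: "m > 0"
  shows "supp (example_measure m \<theta> k) = segS"
proof
  show "supp (example_measure m \<theta> k) \<subseteq> segS"
  proof
    fix p assume p: "p \<in> supp (example_measure m \<theta> k)"
    show "p \<in> segS"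
    proof (rule ccontr)
      assume "p \<notin> segS"
      then obtain r where r: "r > 0" "ball p r \<inter> segS = {}"
        using closed_segS by (metis open_Compl open_contains_ball Compl_iff disjoint_eq_subset_Compl)
      then have "emeasure (example_measure m \<theta> k) (ball p r) = 0"
        using segS_disjoint_null[OF m] by (simp add: emeasure_example_measure[OF m] borel_open)
      with p r show False unfolding supp_def by auto
    qed
  qed
  show "segS \<subseteq> supp (example_measure m \<theta> k)"
  proof
    fix p assume p: "p \<in> segS"
    show "p \<in> supp (example_measure m \<theta> k)" unfolding supp_def
    proof (intro CollectI allI impI)
      fix r :: real assume r: "r > 0"
      define d where "d = min (r / 2) (1 / 2)"
      have d: "0 < d" "d \<le> 1/2" "2 * d \<le> r" using r by (auto simp: d_def)
      have "0 < ennreal d" using d(1) by simp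
      also have "\<dots> \<le> segment_part (ball p (2 * d))" by (rule segment_part_ball[OF p d(1,2)])
      also have "\<dots> \<le> segment_part (ball p r)" by (rule segment_part_mono) (use d in \<open>auto simp: borel_open\<close>)
      finally have "0 < segment_part (ball p r)" .
      then have "0 < ennreal (seg_weight \<theta> k) * segment_part (ball p r)"
        using seg_weight_pos[of \<theta> k] by (simp add: ennreal_zero_less_mult_iff)
      then have "0 < cantor_part m (ball p r) + ennreal (seg_weight \<theta> k) * segment_part (ball p r)"
        by (rule order.strict_trans2) (simp add: add_increasing)
      then show "0 < emeasure (example_measure m \<theta> k) (ball p r)"
        by (simp add: emeasure_example_measure[OF m] borel_open)
    qed
  qed
qed

lemma example_measure_cball_upper:
  assumes m: "m \<ge> 2" and \<theta>: "1 \<le> \<theta>" "2 - \<theta> \<le> cantor_dim m"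
    and r: "0 < r" "r \<le> (1/2) ^ k"
  shows "emeasure (example_measure m \<theta> k) (cball x r) \<le> ennreal ((cantor_frostman_const m + 2) * r powr (2 - \<theta>))"
proof -
  have "(1/2::real) ^ k \<le> 1" by (rule power_le_one) auto
  with r(2) have r1: "r \<le> 1" by linarith
  have "emeasure (example_measure m \<theta> k) (cball x r)
      = cantor_part m (cball x r) + ennreal (seg_weight \<theta> k) * segment_part (cball x r)"
    using m by (simp add: emeasure_example_measure borel_closed)
  also have "\<dots> \<le> ennreal (cantor_frostman_const m * r powr cantor_dim m) + ennreal (seg_weight \<theta> k) * ennreal (2 * r)"
    by (intro add_mono mult_left_mono cantor_part_cball[OF m r(1)] segment_part_cball) (use r in auto)
  also have "\<dots> = ennreal (cantor_frostman_const m * r powr cantor_dim m + seg_weight \<theta> k * (2 * r))"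
    using r seg_weight_pos[of \<theta> k] cantor_frostman_const_pos[OF m] by (simp add: ennreal_mult ennreal_plus)
  also have "\<dots> \<le> ennreal ((cantor_frostman_const m + 2) * r powr (2 - \<theta>))"
  proof (rule ennreal_leI)
    have "r powr cantor_dim m \<le> r powr (2 - \<theta>)" using \<theta> r r1 by (intro powr_mono') auto
    then have "cantor_frostman_const m * r powr cantor_dim m \<le> cantor_frostman_const m * r powr (2 - \<theta>)"
      using cantor_frostman_const_pos[OF m] by simp
    moreover have "(2 ^ k * r) powr (\<theta> - 1) \<le> 1"
      using r \<theta> by (intro powr_le1) (auto simp: field_simps power_one_over)
    then have "seg_weight \<theta> k * r powr (\<theta> - 1) * r powr (2 - \<theta>) \<le> r powr (2 - \<theta>)"
      unfolding seg_weight_eq using r by (simp add: powr_mult mult_left_le_one_le)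
    then have "seg_weight \<theta> k * r \<le> r powr (2 - \<theta>)"
      using r by (simp add: mult.assoc flip: powr_add)
    ultimately show "cantor_frostman_const m * r powr cantor_dim m + seg_weight \<theta> k * (2 * r)
        \<le> (cantor_frostman_const m + 2) * r powr (2 - \<theta>)"
      by (simp add: algebra_simps)
  qed
  finally show ?thesis .
qed

lemma example_measure_cball_lower:
  assumes m: "m > 0" and \<theta>: "1 \<le> \<theta>" and x: "x \<in> segS" and r: "(1/2) ^ k \<le> r" "r \<le> 1"
  shows "ennreal (r powr (2 - \<theta>) / 2) \<le> emeasure (example_measure m \<theta> k) (cball x r)"
proof -
  have r0: "0 < r" using r(1) zero_less_power[of "1/2::real" k] by linarith
  have "1 \<le> (2 ^ k * r) powr (\<theta> - 1)"
    using r(1) \<theta> by (intro ge_one_powr_ge_zero) (auto simp: field_simps power_one_over)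
  then have "r powr (2 - \<theta>) \<le> seg_weight \<theta> k * r powr (\<theta> - 1) * r powr (2 - \<theta>)"
    unfolding seg_weight_eq using r0 by (simp add: powr_mult)
  then have "r powr (2 - \<theta>) / 2 \<le> seg_weight \<theta> k * (r / 2)"
    using r0 by (simp add: mult.assoc flip: powr_add)
  then have "ennreal (r powr (2 - \<theta>) / 2) \<le> ennreal (seg_weight \<theta> k) * ennreal (r / 2)"
    using seg_weight_pos[of \<theta> k] r0 by (simp add: ennreal_mult[symmetric] ennreal_leI)
  also have "\<dots> \<le> ennreal (seg_weight \<theta> k) * segment_part (ball x (2 * (r / 2)))"
    by (intro mult_left_mono segment_part_ball[OF x]) (use r0 r in auto)
  also have "\<dots> \<le> ennreal (seg_weight \<theta> k) * segment_part (cball x r)"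
    by (intro mult_left_mono segment_part_mono) (auto simp: borel_closed)
  also have "\<dots> \<le> emeasure (example_measure m \<theta> k) (cball x r)"
    by (simp add: emeasure_example_measure[OF m] borel_closed add_increasing)
  finally show ?thesis .
qed

lemma weight_0: "weight m \<theta> 0 p = 1"
  by (simp add: weight_def seg_weight_def)

lemma example_measure_eq_density: "example_measure m \<theta> k = density (example_measure m \<theta> 0) (weight m \<theta> k)"
  by (simp add: example_measure_def weight_0 density_1)

lemma weight_ratio_bounds:
  assumes "1 \<le> \<theta>"
  shows "(1/2) powr (\<theta> * real j) \<le> weight m \<theta> k x / weight m \<theta> (k + j) x"
    and "weight m \<theta> k x / weight m \<theta> (k + j) x \<le> 1"
proof -
  have "weight m \<theta> k x / weight m \<theta> (k + j) x = (if x \<in> cantor_line m then 1 else 2 powr (- ((\<theta> - 1) * real j)))"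
    by (simp add: weight_def seg_weight_def flip: powr_diff) (simp add: algebra_simps)
  moreover have "(1/2::real) powr (\<theta> * real j) = 2 powr (- (\<theta> * real j))"
    by (simp add: powr_divide powr_minus_divide)
  moreover have "2 powr (- (\<theta> * real j)) \<le> 2 powr (- ((\<theta> - 1) * real j))"
    by (intro powr_mono) (auto simp: algebra_simps)
  moreover have "2 powr (- ((\<theta> - 1) * real j)) \<le> 1"
    using assms powr_mono[of "- ((\<theta> - 1) * real j)" 0 2] by simp
  moreover have "2 powr (- (\<theta> * real j)) \<le> 1"
    using assms powr_mono[of "- (\<theta> * real j)" 0 2] by simp
  ultimately show "(1/2) powr (\<theta> * real j) \<le> weight m \<theta> k x / weight m \<theta> (k + j) x"
    and "weight m \<theta> k x / weight m \<theta> (k + j) x \<le> 1"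
    by auto
qed

lemma example_measure_weights:
  assumes \<theta>: "1 \<le> \<theta>"
  shows "\<exists>w. (\<forall>k. w k \<in> borel_measurable borel \<and> (\<exists>B. AE x in example_measure m \<theta> 0. \<bar>w k x\<bar> \<le> B)
      \<and> example_measure m \<theta> k = density (example_measure m \<theta> 0) (\<lambda>x. ennreal (w k x))) \<and>
    (\<exists>C3>0. \<forall>k j. AE x in example_measure m \<theta> 0. x \<in> segS \<longrightarrow>
      (1/2) powr (\<theta> * real j) / C3 \<le> w k x / w (k + j) x \<and> w k x / w (k + j) x \<le> C3)"
proof (intro exI[of _ "weight m \<theta>"] conjI allI)
  fix k
  show "weight m \<theta> k \<in> borel_measurable borel" by measurable
  show "\<exists>B. AE x in example_measure m \<theta> 0. \<bar>weight m \<theta> k x\<bar> \<le> B"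
    using seg_weight_pos[of \<theta> k] by (intro exI[of _ "max 1 (seg_weight \<theta> k)"] AE_I2) (simp add: weight_def)
  show "example_measure m \<theta> k = density (example_measure m \<theta> 0) (\<lambda>x. ennreal (weight m \<theta> k x))"
    by (rule example_measure_eq_density)
next
  show "\<exists>C3>0. \<forall>k j. AE x in example_measure m \<theta> 0. x \<in> segS \<longrightarrow>
    (1/2) powr (\<theta> * real j) / C3 \<le> weight m \<theta> k x / weight m \<theta> (k + j) x
    \<and> weight m \<theta> k x / weight m \<theta> (k + j) x \<le> C3"
    using weight_ratio_bounds[OF \<theta>] by (intro exI[of _ 1]) simp
qed

theorem M_cond_example_measure:
  assumes m: "m \<ge> 2" and \<theta>: "1 \<le> \<theta>" "2 - \<theta> \<le> cantor_dim m"
  shows "M_cond \<theta> segS (example_measure m \<theta>) (1/2)"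
  unfolding M_cond_def
proof (intro conjI)
  have m0: "m > 0" using m by simp
  have V: "0 < unit_ball_vol 2" by simp
  show "\<forall>k. is_measure2 (example_measure m \<theta> k)" using is_measure2_example_measure[OF m0] by blast
  show "\<forall>k. supp (example_measure m \<theta> k) = segS" using supp_example_measure[OF m0] by blast
  let ?C1 = "(cantor_frostman_const m + 2) / unit_ball_vol 2"
  show "\<exists>C1>0. \<forall>k x r. 0 < r \<and> r \<le> (1/2) ^ k \<longrightarrow>
      emeasure (example_measure m \<theta> k) (cball x r) \<le> ennreal (C1 * muB x r / r powr \<theta>)"
  proof (intro exI[of _ ?C1] conjI allI impI)
    show "?C1 > 0" using cantor_frostman_const_pos[OF m] V by simp
    fix k x r assume "0 < r \<and> r \<le> (1/2::real) ^ k"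
    then have r: "0 < r" "r \<le> (1/2::real) ^ k" by auto
    have "?C1 * muB x r / r powr \<theta> = (cantor_frostman_const m + 2) * r powr (2 - \<theta>)"
      using mult_muB_div_powr[OF r(1), of ?C1] V by simp
    then show "emeasure (example_measure m \<theta> k) (cball x r) \<le> ennreal (?C1 * muB x r / r powr \<theta>)"
      using example_measure_cball_upper[OF m \<theta> r] by (simp only:)
  qed
  let ?C2 = "1 / (2 * unit_ball_vol 2)"
  show "\<exists>C2>0. \<forall>k x r. x \<in> segS \<and> (1/2) ^ k \<le> r \<and> r \<le> 1 \<longrightarrow>
      ennreal (C2 * muB x r / r powr \<theta>) \<le> emeasure (example_measure m \<theta> k) (cball x r)"
  proof (intro exI[of _ ?C2] conjI allI impI)
    show "?C2 > 0" using V by simp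
    fix k x r assume "x \<in> segS \<and> (1/2::real) ^ k \<le> r \<and> r \<le> 1"
    then have x: "x \<in> segS" and r: "(1/2::real) ^ k \<le> r" "r \<le> 1" by auto
    have "0 < r" using r(1) zero_less_power[of "1/2::real" k] by linarith
    then have "?C2 * muB x r / r powr \<theta> = r powr (2 - \<theta>) / 2"
      using mult_muB_div_powr[of r ?C2] V by simp
    then show "ennreal (?C2 * muB x r / r powr \<theta>) \<le> emeasure (example_measure m \<theta> k) (cball x r)"
      using example_measure_cball_lower[OF m0 \<theta>(1) x r] by (simp only:)
  qed
  show "\<exists>w. (\<forall>k. w k \<in> borel_measurable borel \<and> (\<exists>B. AE x in example_measure m \<theta> 0. \<bar>w k x\<bar> \<le> B)
      \<and> example_measure m \<theta> k = density (example_measure m \<theta> 0) (\<lambda>x. ennreal (w k x))) \<and>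
    (\<exists>C3>0. \<forall>k j. AE x in example_measure m \<theta> 0. x \<in> segS \<longrightarrow>
      (1/2) powr (\<theta> * real j) / C3 \<le> w k x / w (k + j) x \<and> w k x / w (k + j) x \<le> C3)"
    by (rule example_measure_weights[OF \<theta>(1)])
qed simp_all

theorem not_M5_cond_example_measure:
  assumes m: "m \<ge> 2" and \<theta>: "2 - \<theta> < cantor_dim m" and M: "M_cond \<theta> segS (example_measure m \<theta>) \<epsilon>"
  shows "\<not> M5_cond segS (example_measure m \<theta>) \<epsilon>"
proof (rule not_M5_cond_if_thin[OF M _ _ _ \<theta>])
  have m0: "m > 0" using m by simp
  let ?E = "segS \<inter> cantor_line m"
  show E: "?E \<in> sets borel" using closed_segS by (simp add: borel_closed)
  show "?E \<subseteq> segS" by simp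
  show "emeasure (example_measure m \<theta> 0) ?E \<noteq> 0"
    using E cantor_part_cantor_line[OF m0] by (simp add: emeasure_example_measure[OF m0])
  fix k x and r :: real assume r: "0 < r"
  have "emeasure (example_measure m \<theta> k) (cball x r \<inter> ?E) = cantor_part m (cball x r \<inter> ?E)"
    using E segment_part_cantor_line[OF m0, of "cball x r \<inter> segS"]
    by (simp add: emeasure_example_measure[OF m0] borel_closed Int_assoc)
  also have "\<dots> \<le> cantor_part m (cball x r)" unfolding cantor_part_def
    by (rule emeasure_mono) (auto simp: borel_closed)
  also have "\<dots> \<le> ennreal (cantor_frostman_const m * r powr cantor_dim m)"
    by (rule cantor_part_cball[OF m r])
  finally show "measure (example_measure m \<theta> k) (cball x r \<inter> ?E) \<le> cantor_frostman_const m * r powr cantor_dim m"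
    unfolding measure_def using cantor_frostman_const_pos[OF m] by (intro enn2real_leI) auto
qed

theorem mainTheorem10:
  fixes \<theta> :: real
  assumes "1 < \<theta>" and "\<theta> < 2"
  shows "\<exists>m. m \<in> MFam \<theta> segS - MFam_str \<theta> segS"
proof -
  have "\<forall>\<^sub>F m in sequentially. 2 - \<theta> < cantor_dim m \<and> 2 \<le> m"
    using order_tendstoD(1)[OF cantor_dim_tendsto_1, of "2 - \<theta>"] assms
    by (auto intro: eventually_conj eventually_ge_at_top)
  then obtain m where m: "2 \<le> m" "2 - \<theta> < cantor_dim m"
    using eventually_happens[of _ sequentially] by auto
  have "M_cond \<theta> segS (example_measure m \<theta>) (1/2)"
    using m assms by (intro M_cond_example_measure) auto
  moreover have "\<not> M5_cond segS (example_measure m \<theta>) \<epsilon>" if "M_cond \<theta> segS (example_measure m \<theta>) \<epsilon>" for \<epsilon>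
    using not_M5_cond_example_measure[OF m that] .
  ultimately show ?thesis unfolding MFam_def MFam_str_def by blast
qed

end
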